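(* Let $\mathit{VI}$ be a finite set of variables with $\#\mathit{VI}=n$. For each $sh_1,sh_2\in\mathit{SH}$, each $V\in\wp(\mathit{VI})$ and each $k\in\mathbb{N}$ with $1<k\le n$: if $\rho_{\mathit{TSD}_k}(sh_1)\subseteq\rho_{\mathit{TSD}_k}(sh_2)$ then $\mathrm{rel}(V,sh_1)^\star\subseteq\mathrm{rel}(V,sh_2)^\star$.
   Context: $\mathit{SG}=\wp(\mathit{VI})\setminus\{\emptyset\}$, $\mathit{SH}=\wp(\mathit{SG})$. $\rho_{\mathit{TSD}_k}(sh)=\{\,S\in\mathit{SG}\mid \forall T\subseteq S:\ \#T<k\implies S=\bigcup\{U\in sh\mid T\subseteq U\subseteq S\}\,\}$. $\mathrm{rel}(V,sh)=\{S\in sh\mid S\cap V\ne\emptyset\}$; $sh^\star=\{S\in\mathit{SG}\mid\exists sh'\subseteq sh: S=\bigcup sh'\}$. *)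

theory Defs
  imports Main
begin

definition SG :: "'a set \<Rightarrow> 'a set set" where
  "SG VI = Pow VI - {{}}"

definition SH :: "'a set \<Rightarrow> 'a set set set" where
  "SH VI = Pow (SG VI)"

definition rho_TSD :: "'a set \<Rightarrow> nat \<Rightarrow> 'a set set \<Rightarrow> 'a set set" where
  "rho_TSD VI k sh = {S \<in> SG VI. \<forall>T. T \<subseteq> S \<longrightarrow> card T < k \<longrightarrow>
       S = \<Union>{U \<in> sh. T \<subseteq> U \<and> U \<subseteq> S}}"

definition rel :: "'a set \<Rightarrow> 'a set set \<Rightarrow> 'a set set" where
  "rel V sh = {S \<in> sh. S \<inter> V \<noteq> {}}"

definition star :: "'a set \<Rightarrow> 'a set set \<Rightarrow> 'a set set" where
  "star VI sh = {S \<in> SG VI. \<exists>sh'. sh' \<subseteq> sh \<and> S = \<Union>sh'}"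

end

theory Submission
  imports Defs
begin

text \<open>Every sharing group S of sh1 is trivially in the concretization of sh1, hence in that of sh2.
  Taking the singleton T = {v} (allowed since k > 1) for a variable v \<in> S \<inter> V shows that S is
  the union of the groups of sh2 that contain v and lie inside S; all of these are relevant to V.
  So every group of rel V sh1 is a union of groups of rel V sh2, and star closure preserves this.\<close>

lemma member_in_rho_TSD:
  assumes "sh \<subseteq> SG VI" and "S \<in> sh"
  shows "S \<in> rho_TSD VI k sh"
  using assms unfolding rho_TSD_def by blast

lemma rho_TSD_singleton_cover:
  assumes "S \<in> rho_TSD VI k sh" and "1 < k" and "v \<in> S"
  shows "S = \<Union>{U \<in> sh. v \<in> U \<and> U \<subseteq> S}"
proof -
  have "\<forall>T. T \<subseteq> S \<longrightarrow> card T < k \<longrightarrow> S = \<Union>{U \<in> sh. T \<subseteq> U \<and> U \<subseteq> S}"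
    using assms(1) unfolding rho_TSD_def by blast
  from this[rule_format, of "{v}"] have "S = \<Union>{U \<in> sh. {v} \<subseteq> U \<and> U \<subseteq> S}"
    using assms(2,3) by simp
  then show ?thesis by simp
qed

lemma star_subset_if_unions:
  assumes "\<And>S. S \<in> A \<Longrightarrow> \<exists>B'. B' \<subseteq> B \<and> S = \<Union>B'"
  shows "star VI A \<subseteq> star VI B"
proof
  fix X assume "X \<in> star VI A"
  then obtain A' where X: "X \<in> SG VI" "A' \<subseteq> A" "X = \<Union>A'"
    unfolding star_def by blast
  have "\<forall>S\<in>A'. \<exists>B'. B' \<subseteq> B \<and> S = \<Union>B'"
    using assms X(2) by blast
  then obtain cover where cover: "\<forall>S\<in>A'. cover S \<subseteq> B \<and> S = \<Union>(cover S)"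
    by (rule bchoice[elim_format]) blast
  have "X = (\<Union>S\<in>A'. \<Union>(cover S))"
    using X(3) cover by simp
  also have "\<dots> = \<Union>(\<Union>(cover ` A'))"
    by blast
  finally have "X = \<Union>(\<Union>(cover ` A'))" .
  moreover have "\<Union>(cover ` A') \<subseteq> B"
    using cover by blast
  ultimately show "X \<in> star VI B"
    using X(1) unfolding star_def by (intro CollectI conjI exI)
qed

theorem lemma3p19:
  fixes VI :: "'a set" and sh1 sh2 :: "'a set set" and V :: "'a set" and k n :: nat
  assumes "finite VI" and "card VI = n"
    and "sh1 \<in> SH VI" and "sh2 \<in> SH VI"
    and "V \<in> Pow VI"
    and "1 < k" and "k \<le> n"
    and "rho_TSD VI k sh1 \<subseteq> rho_TSD VI k sh2"
  shows "star VI (rel V sh1) \<subseteq> star VI (rel V sh2)"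
proof (rule star_subset_if_unions)
  fix S assume "S \<in> rel V sh1"
  then obtain v where "S \<in> sh1" "v \<in> S" "v \<in> V"
    unfolding rel_def by blast
  have "sh1 \<subseteq> SG VI"
    using assms(3) unfolding SH_def by simp
  then have "S \<in> rho_TSD VI k sh2"
    using member_in_rho_TSD \<open>S \<in> sh1\<close> assms(8) by blast
  then have "S = \<Union>{U \<in> sh2. v \<in> U \<and> U \<subseteq> S}"
    using \<open>1 < k\<close> \<open>v \<in> S\<close> by (rule rho_TSD_singleton_cover)
  moreover have "{U \<in> sh2. v \<in> U \<and> U \<subseteq> S} \<subseteq> rel V sh2"
    using \<open>v \<in> V\<close> unfolding rel_def by blast
  ultimately show "\<exists>B'. B' \<subseteq> rel V sh2 \<and> S = \<Union>B'"
    by (intro exI conjI)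
qed

end
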